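(* Let $f\in C^6([-1,1])$ and $M:=\sup\{|f^{(6)}(x)| : x\in[-1,1]\}$. Define \[ T(f):=\tfrac{2}{5}\cdot\tfrac13\bigl(f(-1)+4f(0)+f(1)\bigr)+\tfrac35\Bigl(f\bigl(-\tfrac{\sqrt3}{3}\bigr)+f\bigl(\tfrac{\sqrt3}{3}\bigr)\Bigr),\qquad I(f):=\int_{-1}^1 f(x)\,dx . \] Then $|T(f)-I(f)|\le \dfrac{M}{28350}$. *)

theory Defs
  imports "HOL-Analysis.Analysis"
begin

end

theory Submission
  imports Defs
begin

text \<open>
  The rule is the blend of Simpson's rule and the two-point Gauss rule with weights 2/5 and 3/5,
  and it is exact for polynomials of degree at most 5. Six integrations by parts on each of the
  four subintervals cut out by the nodes therefore give the Peano representation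
  \<open>I(f) - T(f) = \<integral> K \<cdot> f^(6)\<close> with a piecewise polynomial kernel \<open>K\<close>. The kernel is nonpositive
  on \<open>[-1, 1]\<close>, so \<open>|T(f) - I(f)| \<le> M |\<integral> K|\<close>, and \<open>\<integral> K = -1/28350\<close> is read off by applying the
  representation to \<open>x\<^sup>6\<close>.
\<close>

definition shifted_power_deriv :: "nat \<Rightarrow> nat \<Rightarrow> real \<Rightarrow> real \<Rightarrow> real" where
  "shifted_power_deriv k n c x = (if k \<le> n then fact n / fact (n - k) * (x - c) ^ (n - k) else 0)"

lemma shifted_power_deriv_0 [simp]: "shifted_power_deriv 0 n c x = (x - c) ^ n"
  by (simp add: shifted_power_deriv_def)

lemma shifted_power_deriv_at_centre:
  "shifted_power_deriv k n c c = (if k = n then fact n else 0)"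
  by (simp add: shifted_power_deriv_def)

lemma has_real_derivative_shifted_power_deriv:
  "(shifted_power_deriv k n c has_real_derivative shifted_power_deriv (Suc k) n c x) (at x within S)"
proof (cases "k < n")
  case True
  then obtain m where m: "n - k = Suc m" "n - Suc k = m"
    by (metis Suc_diff_Suc diff_Suc_1)
  have "shifted_power_deriv k n c = (\<lambda>x. fact n / fact (Suc m) * (x - c) ^ Suc m)"
    and "shifted_power_deriv (Suc k) n c x = fact n / fact m * (x - c) ^ m"
    using True m by (auto simp: shifted_power_deriv_def fun_eq_iff)
  then show ?thesis
    by (simp only:) (rule derivative_eq_intros refl | simp add: fact_Suc del: of_nat_Suc)+
next
  case False
  then have "shifted_power_deriv k n c = (\<lambda>x. if k = n then fact n else 0)"
    and "shifted_power_deriv (Suc k) n c x = 0"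
    by (auto simp: shifted_power_deriv_def fun_eq_iff)
  then show ?thesis by simp
qed

lemma shifted_power_deriv_reflect:
  "shifted_power_deriv k n (- c) (- x) = (-1) ^ (n - k) * shifted_power_deriv k n c x"
  by (simp add: shifted_power_deriv_def power_minus[symmetric])

definition parts_sum :: "nat \<Rightarrow> (nat \<Rightarrow> real \<Rightarrow> real) \<Rightarrow> (nat \<Rightarrow> real \<Rightarrow> real) \<Rightarrow> real \<Rightarrow> real" where
  "parts_sum n K D x = (\<Sum>j<n. (-1) ^ j * K (n - Suc j) x * D j x)"

lemma has_real_derivative_parts_sum:
  assumes K: "\<And>k. k < n \<Longrightarrow> (K k has_real_derivative K (Suc k) x) (at x within S)"
    and D: "\<And>k. k < n \<Longrightarrow> (D k has_real_derivative D (Suc k) x) (at x within S)"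
  shows "(parts_sum n K D has_real_derivative K n x * D 0 x - (-1) ^ n * K 0 x * D n x)
           (at x within S)"
proof -
  define a where "a j = (-1) ^ j * K (n - j) x * D j x" for j
  have "((\<lambda>y. (-1) ^ j * K (n - Suc j) y * D j y) has_real_derivative a j - a (Suc j))
          (at x within S)" if "j < n" for j
  proof -
    have "(K (n - Suc j) has_real_derivative K (n - j) x) (at x within S)"
      using K[of "n - Suc j"] that by (simp add: Suc_diff_Suc)
    with D[OF that] show ?thesis
      by (auto intro!: derivative_eq_intros simp: a_def algebra_simps)
  qed
  then have "(parts_sum n K D has_real_derivative (\<Sum>j<n. a j - a (Suc j))) (at x within S)"
    unfolding parts_sum_def[abs_def] by (auto intro: DERIV_sum)
  also have "(\<Sum>j<n. a j - a (Suc j)) = a 0 - a n"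
    by (rule sum_lessThan_telescope')
  finally show ?thesis by (simp add: a_def)
qed

lemma parts_sum_diff:
  "parts_sum n K D x - parts_sum n L D x = parts_sum n (\<lambda>k y. K k y - L k y) D x"
  by (simp add: parts_sum_def sum_subtractf algebra_simps)

lemma parts_sum_eq_first_term:
  assumes "\<And>k. k < n \<Longrightarrow> K k x = 0"
  shows "parts_sum (Suc n) K D x = K n x * D 0 x"
  unfolding parts_sum_def sum.lessThan_Suc_shift using assms by simp

lemma parts_sum_diff_eq_first_term:
  assumes "\<And>k. k < n \<Longrightarrow> K k x = L k x"
  shows "parts_sum (Suc n) K D x - parts_sum (Suc n) L D x = (K n x - L n x) * D 0 x"
  using parts_sum_eq_first_term[of n "\<lambda>k y. K k y - L k y" x D] assms
  by (simp add: parts_sum_diff)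

lemma has_integral_repeated_parts:
  fixes u v :: real
  assumes "u \<le> v"
    and K: "\<And>k x. k < n \<Longrightarrow> x \<in> {u..v} \<Longrightarrow> (K k has_real_derivative K (Suc k) x) (at x within {u..v})"
    and D: "\<And>k x. k < n \<Longrightarrow> x \<in> {u..v} \<Longrightarrow> (D k has_real_derivative D (Suc k) x) (at x within {u..v})"
    and K_top: "\<And>x. x \<in> {u..v} \<Longrightarrow> K n x = 1"
  shows "((\<lambda>x. D 0 x - (-1) ^ n * K 0 x * D n x) has_integral parts_sum n K D v - parts_sum n K D u) {u..v}"
proof (rule fundamental_theorem_of_calculus[OF \<open>u \<le> v\<close>])
  fix x assume "x \<in> {u..v}"
  with has_real_derivative_parts_sum[of n K x "{u..v}" D] K D K_top
  show "(parts_sum n K D has_vector_derivative D 0 x - (-1) ^ n * K 0 x * D n x) (at x within {u..v})"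
    by (simp add: has_real_derivative_iff_has_vector_derivative)
qed

lemma has_integral_repeated_parts_subinterval:
  fixes D K :: "nat \<Rightarrow> real \<Rightarrow> real" and P :: "real \<Rightarrow> real"
  assumes "a \<le> u" "u \<le> v" "v \<le> b"
    and D: "\<And>k x. k < n \<Longrightarrow> x \<in> {a..b} \<Longrightarrow> (D k has_real_derivative D (Suc k) x) (at x within {a..b})"
    and K: "\<And>k x. (K k has_real_derivative K (Suc k) x) (at x within {u..v})"
    and K_top: "\<And>x. K n x = 1"
    and P: "\<And>x. u < x \<Longrightarrow> x < v \<Longrightarrow> P x = (-1) ^ n * K 0 x"
  shows "((\<lambda>x. D 0 x - P x * D n x) has_integral parts_sum n K D v - parts_sum n K D u) {u..v}"
proof (rule has_integral_spike_finite[of "{u, v}"])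
  have "(D k has_real_derivative D (Suc k) x) (at x within {u..v})"
    if "k < n" "x \<in> {u..v}" for k x
    using D[of k x] that assms(1,3) by (auto intro: has_field_derivative_subset)
  then show "((\<lambda>x. D 0 x - (-1) ^ n * K 0 x * D n x) has_integral
               parts_sum n K D v - parts_sum n K D u) {u..v}"
    using has_integral_repeated_parts[OF \<open>u \<le> v\<close>] K K_top by blast
qed (use P in auto)

definition gauss_node :: real where
  "gauss_node = sqrt 3 / 3"

lemma gauss_node_sq: "gauss_node ^ 2 = 1 / 3"
  by (simp add: gauss_node_def power_divide)

lemma gauss_node_bounds: "2883 / 5000 < gauss_node" "gauss_node < 723 / 1250"
proof -
  have "1.73 < sqrt 3" "sqrt 3 < (1.735 :: real)"
    by (rule real_less_rsqrt, simp add: power2_eq_square)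
       (rule real_less_lsqrt, simp_all add: power2_eq_square)
  then show "2883 / 5000 < gauss_node" "gauss_node < 723 / 1250"
    by (simp_all add: gauss_node_def)
qed

lemma gauss_node_powers:
  "gauss_node ^ 3 = gauss_node / 3" "gauss_node ^ 4 = 1 / 9" "gauss_node ^ 6 = 1 / 27"
proof -
  have "gauss_node ^ 3 = gauss_node ^ 2 * gauss_node" "gauss_node ^ 4 = (gauss_node ^ 2) ^ 2"
    "gauss_node ^ 6 = (gauss_node ^ 2) ^ 3"
    by (simp_all flip: power_mult power_Suc2)
  then show "gauss_node ^ 3 = gauss_node / 3" "gauss_node ^ 4 = 1 / 9" "gauss_node ^ 6 = 1 / 27"
    by (simp_all add: gauss_node_sq power_divide)
qed

definition quad_rule :: "(real \<Rightarrow> real) \<Rightarrow> real" where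
  "quad_rule f = (2/5) * ((1/3) * (f (-1) + 4 * f 0 + f 1)) + (3/5) * (f (- gauss_node) + f gauss_node)"

text \<open>
  \<open>kernel_i k\<close> is the \<open>k\<close>-th derivative of the Peano kernel on the \<open>i\<close>-th subinterval. Seen from
  the nearer endpoint \<open>\<plusminus>1\<close> it is \<open>(x \<mp> 1)\<^sup>6/6!\<close> corrected by \<open>\<mp>w\<^sub>j (x - x\<^sub>j)\<^sup>5/5!\<close> for each node
  \<open>x\<^sub>j\<close> from that endpoint up to the near end of the subinterval, \<open>w\<^sub>j\<close> being its weight: 2/15 at
  \<open>\<plusminus>1\<close> and 3/5 at \<open>\<plusminus>gauss_node\<close> give the coefficients 1/900 and 1/200.
\<close>

definition kernel_1 :: "nat \<Rightarrow> real \<Rightarrow> real" where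
  "kernel_1 k x = shifted_power_deriv k 6 (-1) x / 720 - shifted_power_deriv k 5 (-1) x / 900"

definition kernel_2 :: "nat \<Rightarrow> real \<Rightarrow> real" where
  "kernel_2 k x = kernel_1 k x - shifted_power_deriv k 5 (- gauss_node) x / 200"

definition kernel_4 :: "nat \<Rightarrow> real \<Rightarrow> real" where
  "kernel_4 k x = shifted_power_deriv k 6 1 x / 720 + shifted_power_deriv k 5 1 x / 900"

definition kernel_3 :: "nat \<Rightarrow> real \<Rightarrow> real" where
  "kernel_3 k x = kernel_4 k x + shifted_power_deriv k 5 gauss_node x / 200"

lemmas kernel_defs = kernel_1_def kernel_2_def kernel_3_def kernel_4_def

text \<open>The two descriptions of the kernel meet at \<open>0\<close> to fifth order: this is where exactness of
  the rule, i.e.\ \<open>gauss_node\<^sup>2 = 1/3\<close>, enters.\<close>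

lemma kernel_2_eq_kernel_3_at_0:
  assumes "k < 5"
  shows "kernel_2 k 0 = kernel_3 k 0"
proof -
  from assms have "k \<in> {0, 1, 2, 3, 4}"
    by auto
  then show ?thesis
    by (auto simp: kernel_defs shifted_power_deriv_def fact_numeral power_minus' gauss_node_sq
        gauss_node_powers)
qed

lemma kernel_has_real_derivative:
  "(kernel_1 k has_real_derivative kernel_1 (Suc k) x) (at x within S)"
  "(kernel_2 k has_real_derivative kernel_2 (Suc k) x) (at x within S)"
  "(kernel_3 k has_real_derivative kernel_3 (Suc k) x) (at x within S)"
  "(kernel_4 k has_real_derivative kernel_4 (Suc k) x) (at x within S)"
  by (unfold kernel_defs[abs_def])
     (auto intro!: derivative_eq_intros has_real_derivative_shifted_power_deriv)

lemma kernel_6: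
  "kernel_1 6 x = 1" "kernel_2 6 x = 1" "kernel_3 6 x = 1" "kernel_4 6 x = 1"
  by (simp_all add: kernel_defs shifted_power_deriv_def fact_numeral)

lemma kernel_reflect:
  "kernel_1 0 (- x) = kernel_4 0 x" "kernel_2 0 (- x) = kernel_3 0 x"
  by (simp_all add: kernel_defs shifted_power_deriv_reflect del: shifted_power_deriv_0)

lemma kernel_4_nonpos:
  assumes "gauss_node \<le> x" "x \<le> 1"
  shows "kernel_4 0 x \<le> 0"
proof -
  have "kernel_4 0 x = (x - 1) ^ 5 * ((x - 1) / 720 + 1 / 900)"
    by (simp add: kernel_4_def eval_nat_numeral field_simps)
  moreover have "(x - 1) ^ 5 \<le> 0"
    using assms by (simp add: power_le_zero_eq)
  moreover have "(x - 1) / 720 + 1 / 900 \<ge> 0"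
    using assms gauss_node_bounds by (simp add: field_simps)
  ultimately show ?thesis
    by (simp add: mult_nonpos_nonneg)
qed

lemma kernel_3_derivative_eq:
  "kernel_3 1 x = x * (x\<^sup>2 * (x\<^sup>2 / 120 - x / 90 + (11/180 - gauss_node / 10))
                   + (7/360 - gauss_node / 30))"
proof -
  have "kernel_3 1 x - x * (x\<^sup>2 * (x\<^sup>2 / 120 - x / 90 + (11/180 - gauss_node / 10))
                   + (7/360 - gauss_node / 30))
     = (gauss_node\<^sup>2 - 1/3) * (3 * x\<^sup>2 / 20 - gauss_node * x / 10 + (gauss_node\<^sup>2 + 1/3) / 40)"
    by (simp add: kernel_defs shifted_power_deriv_def fact_numeral eval_nat_numeral field_simps)
  then show ?thesis
    using gauss_node_sq by simp
qed

lemma kernel_3_derivative_nonneg: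
  assumes "0 \<le> x" "x \<le> gauss_node"
  shows "kernel_3 1 x \<ge> 0"
proof -
  define Q where "Q y = y\<^sup>2 / 120 - y / 90 + (11/180 - gauss_node / 10)" for y
  have Q_node: "Q gauss_node = 23/360 - gauss_node / 9"
    unfolding Q_def using gauss_node_sq by (simp add: algebra_simps)
  have "Q x - Q gauss_node = (gauss_node - x) * (1/90 - (x + gauss_node) / 120)"
    by (simp add: Q_def power2_eq_square field_simps)
  moreover have "1/90 - (x + gauss_node) / 120 \<ge> 0"
    using assms gauss_node_bounds by simp
  ultimately have Q_mono: "Q gauss_node \<le> Q x"
    using assms by (metis diff_ge_0_iff_ge mult_nonneg_nonneg)
  have "x\<^sup>2 \<le> 1/3"
    using assms power_mono[of x gauss_node 2] gauss_node_sq by simp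
  then have "(1/3) * Q gauss_node \<le> x\<^sup>2 * Q gauss_node"
    using Q_node gauss_node_bounds by (intro mult_right_mono_neg) auto
  also have "\<dots> \<le> x\<^sup>2 * Q x"
    using Q_mono by (simp add: mult_left_mono)
  finally have "x\<^sup>2 * Q x + (7/360 - gauss_node / 30) \<ge> 0"
    using Q_node gauss_node_bounds by linarith
  then show ?thesis
    unfolding kernel_3_derivative_eq Q_def[symmetric] using assms by simp
qed

lemma kernel_3_nonpos:
  assumes "0 \<le> x" "x \<le> gauss_node"
  shows "kernel_3 0 x \<le> 0"
proof -
  have "kernel_3 0 x \<le> kernel_3 0 gauss_node"
    using assms kernel_3_derivative_nonneg kernel_has_real_derivative(3)[of 0]
    by (intro DERIV_nonneg_imp_nondecreasing[OF assms(2)]) (metis One_nat_def order.trans)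
  also have "kernel_3 0 gauss_node = kernel_4 0 gauss_node"
    by (simp add: kernel_3_def)
  also have "\<dots> \<le> 0"
    using kernel_4_nonpos gauss_node_bounds by simp
  finally show ?thesis .
qed

definition peano_kernel :: "real \<Rightarrow> real" where
  "peano_kernel x =
     (if x \<le> - gauss_node then kernel_1 0 x else if x \<le> 0 then kernel_2 0 x
      else if x \<le> gauss_node then kernel_3 0 x else kernel_4 0 x)"

lemma peano_kernel_nonpos:
  assumes "-1 \<le> x" "x \<le> 1"
  shows "peano_kernel x \<le> 0"
  using assms kernel_3_nonpos[of x] kernel_4_nonpos[of x] kernel_3_nonpos[of "- x"]
    kernel_4_nonpos[of "- x"] kernel_reflect[of "- x"]
  by (auto simp: peano_kernel_def)

text \<open>The weights of the rule appear as the jumps of the fifth derivative of the kernel.\<close>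

lemma kernel_parts_sums_at_nodes:
  "parts_sum 6 kernel_1 D (-1) = - 2/15 * D 0 (-1)"
  "parts_sum 6 kernel_1 D (- gauss_node) - parts_sum 6 kernel_2 D (- gauss_node)
     = 3/5 * D 0 (- gauss_node)"
  "parts_sum 6 kernel_2 D 0 - parts_sum 6 kernel_3 D 0 = 8/15 * D 0 0"
  "parts_sum 6 kernel_3 D gauss_node - parts_sum 6 kernel_4 D gauss_node
     = 3/5 * D 0 gauss_node"
  "parts_sum 6 kernel_4 D 1 = 2/15 * D 0 1"
proof -
  show "parts_sum 6 kernel_1 D (-1) = - 2/15 * D 0 (-1)"
    using parts_sum_eq_first_term[of 5 kernel_1 "-1" D]
    by (simp add: kernel_1_def shifted_power_deriv_at_centre shifted_power_deriv_def fact_numeral)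
  show "parts_sum 6 kernel_4 D 1 = 2/15 * D 0 1"
    using parts_sum_eq_first_term[of 5 kernel_4 1 D]
    by (simp add: kernel_4_def shifted_power_deriv_at_centre shifted_power_deriv_def fact_numeral)
  show "parts_sum 6 kernel_1 D (- gauss_node) - parts_sum 6 kernel_2 D (- gauss_node)
     = 3/5 * D 0 (- gauss_node)"
    using parts_sum_diff_eq_first_term[of 5 kernel_1 "- gauss_node" kernel_2 D]
    by (simp add: kernel_2_def shifted_power_deriv_at_centre fact_numeral)
  show "parts_sum 6 kernel_3 D gauss_node - parts_sum 6 kernel_4 D gauss_node
     = 3/5 * D 0 gauss_node"
    using parts_sum_diff_eq_first_term[of 5 kernel_3 gauss_node kernel_4 D]
    by (simp add: kernel_3_def shifted_power_deriv_at_centre fact_numeral)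
  show "parts_sum 6 kernel_2 D 0 - parts_sum 6 kernel_3 D 0 = 8/15 * D 0 0"
    using parts_sum_diff_eq_first_term[of 5 kernel_2 0 kernel_3 D] kernel_2_eq_kernel_3_at_0
    by (simp add: kernel_defs shifted_power_deriv_def fact_numeral)
qed

lemma quad_rule_peano_representation:
  fixes f :: "real \<Rightarrow> real" and Df :: "nat \<Rightarrow> real \<Rightarrow> real"
  assumes D0: "\<And>x. x \<in> {-1..1} \<Longrightarrow> Df 0 x = f x"
    and Dsuc: "\<And>k x. k < 6 \<Longrightarrow> x \<in> {-1..1} \<Longrightarrow>
        (Df k has_real_derivative Df (Suc k) x) (at x within {-1..1})"
  shows "((\<lambda>x. f x - peano_kernel x * Df 6 x) has_integral quad_rule f) {-1..1}"
proof -
  let ?g = "\<lambda>x. Df 0 x - peano_kernel x * Df 6 x"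
  let ?P1 = "parts_sum 6 kernel_1 Df" and ?P2 = "parts_sum 6 kernel_2 Df"
    and ?P3 = "parts_sum 6 kernel_3 Df" and ?P4 = "parts_sum 6 kernel_4 Df"
  have a: "-1 \<le> - gauss_node" "- gauss_node \<le> 0" "0 \<le> gauss_node" "gauss_node \<le> 1"
    using gauss_node_bounds by auto
  note pieces = has_integral_repeated_parts_subinterval[where D = Df and n = 6 and P = peano_kernel,
      OF _ _ _ Dsuc, unfolded atLeastAtMost_iff]
  have "(?g has_integral ?P1 (- gauss_node) - ?P1 (-1)) {-1..- gauss_node}"
    "(?g has_integral ?P2 0 - ?P2 (- gauss_node)) {- gauss_node..0}"
    "(?g has_integral ?P3 gauss_node - ?P3 0) {0..gauss_node}"
    "(?g has_integral ?P4 1 - ?P4 gauss_node) {gauss_node..1}"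
    by (rule pieces; use a in \<open>simp add: kernel_has_real_derivative kernel_6 peano_kernel_def\<close>)+
  then have "(?g has_integral (?P1 (- gauss_node) - ?P1 (-1)) + ((?P2 0 - ?P2 (- gauss_node))
              + ((?P3 gauss_node - ?P3 0) + (?P4 1 - ?P4 gauss_node)))) {-1..1}"
    using a by (meson has_integral_combine order_trans)
  moreover have "(?P1 (- gauss_node) - ?P1 (-1)) + ((?P2 0 - ?P2 (- gauss_node))
              + ((?P3 gauss_node - ?P3 0) + (?P4 1 - ?P4 gauss_node))) = quad_rule f"
  proof -
    have "Df 0 (-1) = f (-1)" "Df 0 (- gauss_node) = f (- gauss_node)" "Df 0 0 = f 0"
      "Df 0 gauss_node = f gauss_node" "Df 0 1 = f 1"
      using a by (auto intro: D0)
    with kernel_parts_sums_at_nodes[of Df] show ?thesis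
      unfolding quad_rule_def by argo
  qed
  ultimately have "(?g has_integral quad_rule f) {-1..1}"
    by simp
  then show ?thesis
    by (rule has_integral_eq[rotated]) (simp add: D0)
qed

lemma peano_kernel_integral: "(peano_kernel has_integral - 1 / 28350) {-1..1}"
proof -
  have "((\<lambda>x. x ^ 6 - peano_kernel x * shifted_power_deriv 6 6 0 x) has_integral
           quad_rule (\<lambda>x. x ^ 6)) {-1..1}"
    by (rule quad_rule_peano_representation[of "\<lambda>k. shifted_power_deriv k 6 0"])
       (simp_all add: has_real_derivative_shifted_power_deriv)
  then have "((\<lambda>x. x ^ 6 - peano_kernel x * 720) has_integral quad_rule (\<lambda>x. x ^ 6)) {-1..1}"
    by (simp add: shifted_power_deriv_def fact_numeral)
  moreover have "quad_rule (\<lambda>x. x ^ 6) = 14 / 45"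
    by (simp add: quad_rule_def gauss_node_powers)
  moreover have "((\<lambda>x. x ^ 6) has_integral 1 ^ 7 / 7 - (-1) ^ 7 / 7) {-1..1::real}"
    by (rule fundamental_theorem_of_calculus)
       (auto intro!: derivative_eq_intros simp: has_real_derivative_iff_has_vector_derivative[symmetric])
  ultimately have "((\<lambda>x. (x ^ 6 - (x ^ 6 - peano_kernel x * 720)) / 720) has_integral
                     (2 / 7 - 14 / 45) / 720) {-1..1}"
    by (intro has_integral_divide has_integral_diff) auto
  then show ?thesis
    by simp
qed

lemma abs_integral_le_kernel_integral:
  fixes K g :: "'a::euclidean_space \<Rightarrow> real"
  assumes "((\<lambda>x. K x * g x) has_integral E) S" "(K has_integral I) S"
    and "\<And>x. x \<in> S \<Longrightarrow> K x \<le> 0" "\<And>x. x \<in> S \<Longrightarrow> \<bar>g x\<bar> \<le> M"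
  shows "\<bar>E\<bar> \<le> - I * M"
proof -
  have KM: "((\<lambda>x. - M * K x) has_integral - I * M) S"
    using has_integral_mult_right[OF assms(2), of "- M"] by (simp add: mult.commute)
  have "\<bar>K x * g x\<bar> \<le> - M * K x" if "x \<in> S" for x
  proof -
    have "\<bar>K x\<bar> * \<bar>g x\<bar> \<le> \<bar>K x\<bar> * M"
      using assms(4)[OF that] by (simp add: mult_left_mono)
    then show ?thesis
      using assms(3)[OF that] by (simp add: abs_mult abs_of_nonpos mult.commute)
  qed
  then have "E \<le> - I * M" "- E \<le> - I * M"
    using has_integral_le[OF assms(1) KM] has_integral_le[OF has_integral_neg[OF assms(1)] KM]
    by (auto simp: abs_le_iff)
  then show ?thesis
    by linarith
qed

theorem proposition5:
  fixes f :: "real \<Rightarrow> real" and Df :: "nat \<Rightarrow> real \<Rightarrow> real"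
  assumes D0: "\<And>x. x \<in> {-1..1} \<Longrightarrow> Df 0 x = f x"
    and Dsuc: "\<And>k x. k < 6 \<Longrightarrow> x \<in> {-1..1} \<Longrightarrow>
        (Df k has_real_derivative Df (Suc k) x) (at x within {-1..1})"
    and cont6: "continuous_on {-1..1} (Df 6)"
  shows "\<bar>(2/5) * ((1/3) * (f (-1) + 4 * f 0 + f 1))
           + (3/5) * (f (- sqrt 3 / 3) + f (sqrt 3 / 3))
           - integral {-1..1} f\<bar>
         \<le> (SUP x\<in>{-1..1}. \<bar>Df 6 x\<bar>) / 28350"
proof -
  have "continuous_on {-1..1} f"
    using continuous_on_eq[of _ "Df 0"] Dsuc[of 0] D0
    by (metis DERIV_continuous continuous_on_eq_continuous_within zero_less_numeral)
  then have "((\<lambda>x. f x - (f x - peano_kernel x * Df 6 x)) has_integral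
               integral {-1..1} f - quad_rule f) {-1..1}"
    by (intro has_integral_diff quad_rule_peano_representation D0 Dsuc integrable_integral
        integrable_continuous_interval)
  moreover have "bdd_above ((\<lambda>x. \<bar>Df 6 x\<bar>) ` {-1..1})"
    by (intro bounded_imp_bdd_above compact_imp_bounded compact_continuous_image
        continuous_intros cont6) simp
  then have "\<bar>Df 6 x\<bar> \<le> (SUP x\<in>{-1..1}. \<bar>Df 6 x\<bar>)" if "x \<in> {-1..1}" for x
    by (rule cSUP_upper[OF that])
  ultimately have "\<bar>integral {-1..1} f - quad_rule f\<bar> \<le> 1 / 28350 * (SUP x\<in>{-1..1}. \<bar>Df 6 x\<bar>)"
    using abs_integral_le_kernel_integral[OF _ peano_kernel_integral] peano_kernel_nonpos
    by simp
  then show ?thesis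
    by (simp add: quad_rule_def gauss_node_def abs_minus_commute)
qed

end
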